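(* Let $\Lambda_1,\Lambda_2,\Gamma$ be $k$-graphs and for $i=1,2$ let $\phi_i:\Gamma\to\Lambda_i$ be an injective $k$-graph morphism such that either $\phi_i(\Gamma)$ is hereditary in $\Lambda_i$ for both $i=1,2$, or $\phi_i(\Gamma)$ is co-hereditary in $\Lambda_i$ for both $i=1,2$. Let $\sim_\phi$ be the smallest equivalence relation on the disjoint union $\Lambda_1\sqcup\Lambda_2$ such that $\phi_1(\gamma)\sim_\phi\phi_2(\gamma)$ for all $\gamma\in\Gamma$. Then $\sim_\phi$ satisfies the following four properties (and hence $(\Lambda_1\sqcup\Lambda_2)/{\sim_\phi}$ is a $k$-graph with the induced structure maps): (1) if $\mu \sim_\phi \nu$ then $d(\mu) = d(\nu)$; (2) if $\alpha \sim_\phi \alpha'$, $\beta \sim_\phi \beta'$, $r(\beta) = s(\alpha)$ and $r(\beta') = s(\alpha')$, then $\alpha\beta \sim_\phi \alpha'\beta'$; (3) if $\alpha\beta \sim_\phi \alpha'\beta'$ and $d(\alpha) = d(\alpha')$, then $\alpha \sim_\phi \alpha'$ and $\beta \sim_\phi \beta'$; (4) if $s(\alpha) \sim_\phi r(\beta)$, then there exist $\alpha'\sim_\phi\alpha$ and $\beta'\sim_\phi\beta$ with $s(\alpha') = r(\beta')$.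
   Context: A $k$-graph is a countable small category $\Lambda$ with a functor $d:\Lambda\to\mathbb{N}^k$ such that, writing $\Lambda^n=d^{-1}(n)$, for all $m,n\in\mathbb{N}^k$ composition is a bijection from $\{(\mu,\nu)\in\Lambda^m\times\Lambda^n: s(\mu)=r(\nu)\}$ onto $\Lambda^{m+n}$; vertices $\Lambda^0$ are identified with identity morphisms, and $r,s$ are range and source maps. A $k$-graph morphism is a degree-preserving functor. The disjoint union of two $k$-graphs is a $k$-graph in the obvious way. For $v\in\Lambda^0$ and $X\subseteq\Lambda$ write $vX=\{\lambda\in X: r(\lambda)=v\}$, $Xv=\{\lambda\in X:s(\lambda)=v\}$, and for $V\subseteq\Lambda^0$, $V\Lambda=r^{-1}(V)$, $\Lambda V=s^{-1}(V)$. A subgraph $\Gamma'\subseteq\Lambda$ is hereditary if $\Gamma'=\Gamma'^0\Lambda$ and co-hereditary if $\Gamma'=\Lambda\Gamma'^0$. *)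

theory Defs
  imports Main "HOL-Library.Countable_Set"
begin

text \<open>A k-graph presented as a small category whose morphisms form the set Mor,
  with identity morphisms playing the role of vertices, range/source maps,
  a (partial) composition (only meaningful on composable pairs) and a degree
  functor into N^k, where N^k is represented as functions 'k => nat for a
  finite (nonempty) index type 'k with pointwise addition.\<close>

record ('a, 'k) kgraph =
  Mor :: "'a set"
  rng :: "'a \<Rightarrow> 'a"
  src :: "'a \<Rightarrow> 'a"
  comp :: "'a \<Rightarrow> 'a \<Rightarrow> 'a"
  deg :: "'a \<Rightarrow> 'k \<Rightarrow> nat"

definition deg_add :: "('k \<Rightarrow> nat) \<Rightarrow> ('k \<Rightarrow> nat) \<Rightarrow> ('k \<Rightarrow> nat)" where
  "deg_add m n = (\<lambda>i. m i + n i)"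

definition deg_zero :: "'k \<Rightarrow> nat" where
  "deg_zero = (\<lambda>i. 0)"

definition Obj :: "('a, 'k) kgraph \<Rightarrow> 'a set" where
  "Obj L = {v \<in> Mor L. rng L v = v \<and> src L v = v}"

definition is_kgraph :: "('a, 'k::finite) kgraph \<Rightarrow> bool" where
  "is_kgraph L \<longleftrightarrow>
     countable (Mor L) \<and>
     (\<forall>\<mu>\<in>Mor L. rng L \<mu> \<in> Obj L \<and> src L \<mu> \<in> Obj L) \<and>
     (\<forall>\<mu>\<in>Mor L. \<forall>\<nu>\<in>Mor L. src L \<mu> = rng L \<nu> \<longrightarrow>
        comp L \<mu> \<nu> \<in> Mor L \<and> rng L (comp L \<mu> \<nu>) = rng L \<mu> \<and>
        src L (comp L \<mu> \<nu>) = src L \<nu>) \<and>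
     (\<forall>\<mu>\<in>Mor L. \<forall>\<nu>\<in>Mor L. \<forall>\<rho>\<in>Mor L. src L \<mu> = rng L \<nu> \<longrightarrow> src L \<nu> = rng L \<rho> \<longrightarrow>
        comp L (comp L \<mu> \<nu>) \<rho> = comp L \<mu> (comp L \<nu> \<rho>)) \<and>
     (\<forall>\<mu>\<in>Mor L. comp L (rng L \<mu>) \<mu> = \<mu> \<and> comp L \<mu> (src L \<mu>) = \<mu>) \<and>
     (\<forall>v\<in>Obj L. deg L v = deg_zero) \<and>
     (\<forall>\<mu>\<in>Mor L. \<forall>\<nu>\<in>Mor L. src L \<mu> = rng L \<nu> \<longrightarrow>
        deg L (comp L \<mu> \<nu>) = deg_add (deg L \<mu>) (deg L \<nu>)) \<and>
     (\<forall>m n. \<forall>l\<in>Mor L. deg L l = deg_add m n \<longrightarrow>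
        (\<exists>!p. fst p \<in> Mor L \<and> snd p \<in> Mor L \<and> deg L (fst p) = m \<and> deg L (snd p) = n \<and>
              src L (fst p) = rng L (snd p) \<and> comp L (fst p) (snd p) = l))"

definition is_kgraph_morphism ::
  "('c, 'k) kgraph \<Rightarrow> ('a, 'k) kgraph \<Rightarrow> ('c \<Rightarrow> 'a) \<Rightarrow> bool" where
  "is_kgraph_morphism G L f \<longleftrightarrow>
     (\<forall>\<gamma>\<in>Mor G. f \<gamma> \<in> Mor L \<and> deg L (f \<gamma>) = deg G \<gamma> \<and>
        rng L (f \<gamma>) = f (rng G \<gamma>) \<and> src L (f \<gamma>) = f (src G \<gamma>)) \<and>
     (\<forall>\<mu>\<in>Mor G. \<forall>\<nu>\<in>Mor G. src G \<mu> = rng G \<nu> \<longrightarrow>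
        f (comp G \<mu> \<nu>) = comp L (f \<mu>) (f \<nu>))"

definition hereditary :: "('a, 'k) kgraph \<Rightarrow> 'a set \<Rightarrow> bool" where
  "hereditary L S \<longleftrightarrow> S = {l \<in> Mor L. rng L l \<in> S \<inter> Obj L}"

definition cohereditary :: "('a, 'k) kgraph \<Rightarrow> 'a set \<Rightarrow> bool" where
  "cohereditary L S \<longleftrightarrow> S = {l \<in> Mor L. src L l \<in> S \<inter> Obj L}"

definition kg_union :: "('a, 'k) kgraph \<Rightarrow> ('b, 'k) kgraph \<Rightarrow> ('a + 'b, 'k) kgraph" where
  "kg_union L1 L2 =
    \<lparr> Mor = Inl ` Mor L1 \<union> Inr ` Mor L2,
      rng = case_sum (\<lambda>x. Inl (rng L1 x)) (\<lambda>y. Inr (rng L2 y)),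
      src = case_sum (\<lambda>x. Inl (src L1 x)) (\<lambda>y. Inr (src L2 y)),
      comp = (\<lambda>p q. case (p, q) of
                 (Inl x, Inl x') \<Rightarrow> Inl (comp L1 x x')
               | (Inr y, Inr y') \<Rightarrow> Inr (comp L2 y y')
               | _ \<Rightarrow> undefined),
      deg = case_sum (deg L1) (deg L2) \<rparr>"

definition equiv_closure_on :: "'a set \<Rightarrow> ('a \<times> 'a) set \<Rightarrow> ('a \<times> 'a) set" where
  "equiv_closure_on A R = \<Inter> {E. equiv A E \<and> R \<subseteq> E}"

definition sim_phi ::
  "('a, 'k) kgraph \<Rightarrow> ('b, 'k) kgraph \<Rightarrow> ('c, 'k) kgraph \<Rightarrow> ('c \<Rightarrow> 'a) \<Rightarrow> ('c \<Rightarrow> 'b)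
    \<Rightarrow> (('a + 'b) \<times> ('a + 'b)) set" where
  "sim_phi L1 L2 G f1 f2 =
     equiv_closure_on (Mor (kg_union L1 L2)) {(Inl (f1 \<gamma>), Inr (f2 \<gamma>)) | \<gamma>. \<gamma> \<in> Mor G}"

end

theory Submission
  imports Defs
begin

text \<open>Because \<open>\<phi>\<^sub>1\<close> and \<open>\<phi>\<^sub>2\<close> are injective, \<open>\<sim>\<^sub>\<phi>\<close> consists only of the diagonal
  and the pairs \<open>\<phi>\<^sub>1(\<gamma>) \<sim> \<phi>\<^sub>2(\<gamma>)\<close> and their reverses, so each property reduces to a
  statement about \<open>\<Gamma>\<close>. If \<open>\<phi>\<^sub>i(\<Gamma>)\<close> is hereditary (co-hereditary), a path whose range
  (source) lies in \<open>\<phi>\<^sub>i(\<Gamma>)\<close> lies in \<open>\<phi>\<^sub>i(\<Gamma>)\<close> itself; hence both factors of a path in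
  \<open>\<phi>\<^sub>i(\<Gamma>)\<close> come from \<open>\<Gamma>\<close>, and unique factorisation in \<open>\<Gamma>\<close> gives (3). For (4), if
  \<open>s(\<alpha>) = \<phi>\<^sub>1(v)\<close> and \<open>r(\<beta>) = \<phi>\<^sub>2(v)\<close>, then \<open>\<beta>\<close> (hereditary case) or \<open>\<alpha>\<close> (co-hereditary
  case) comes from \<open>\<Gamma>\<close>, and replacing it by its glued partner makes the pair composable.\<close>

lemma Obj_subset_Mor: "Obj L \<subseteq> Mor L"
  unfolding Obj_def by blast

context
  fixes L :: "('a, 'k::finite) kgraph"
  assumes kgraph: "is_kgraph L"
begin

lemma kgraph_rng_Obj: "\<mu> \<in> Mor L \<Longrightarrow> rng L \<mu> \<in> Obj L"
  and kgraph_src_Obj: "\<mu> \<in> Mor L \<Longrightarrow> src L \<mu> \<in> Obj L"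
  using kgraph unfolding is_kgraph_def by blast+

lemma kgraph_rng_Mor: "\<mu> \<in> Mor L \<Longrightarrow> rng L \<mu> \<in> Mor L"
  and kgraph_src_Mor: "\<mu> \<in> Mor L \<Longrightarrow> src L \<mu> \<in> Mor L"
  using kgraph_rng_Obj kgraph_src_Obj Obj_subset_Mor by (meson subsetD)+

lemma kgraph_comp:
  assumes "\<mu> \<in> Mor L" "\<nu> \<in> Mor L" "src L \<mu> = rng L \<nu>"
  shows kgraph_comp_Mor: "comp L \<mu> \<nu> \<in> Mor L"
    and kgraph_rng_comp: "rng L (comp L \<mu> \<nu>) = rng L \<mu>"
    and kgraph_src_comp: "src L (comp L \<mu> \<nu>) = src L \<nu>"
    and kgraph_deg_comp: "deg L (comp L \<mu> \<nu>) = deg_add (deg L \<mu>) (deg L \<nu>)"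
proof -
  have "\<forall>\<mu>\<in>Mor L. \<forall>\<nu>\<in>Mor L. src L \<mu> = rng L \<nu> \<longrightarrow>
      comp L \<mu> \<nu> \<in> Mor L \<and> rng L (comp L \<mu> \<nu>) = rng L \<mu> \<and> src L (comp L \<mu> \<nu>) = src L \<nu>"
    using kgraph unfolding is_kgraph_def by blast
  moreover have "\<forall>\<mu>\<in>Mor L. \<forall>\<nu>\<in>Mor L. src L \<mu> = rng L \<nu> \<longrightarrow>
      deg L (comp L \<mu> \<nu>) = deg_add (deg L \<mu>) (deg L \<nu>)"
    using kgraph unfolding is_kgraph_def by blast
  ultimately show "comp L \<mu> \<nu> \<in> Mor L" "rng L (comp L \<mu> \<nu>) = rng L \<mu>"
    "src L (comp L \<mu> \<nu>) = src L \<nu>" "deg L (comp L \<mu> \<nu>) = deg_add (deg L \<mu>) (deg L \<nu>)"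
    using assms by simp_all
qed

lemma kgraph_factorisation_unique:
  assumes "a \<in> Mor L" "b \<in> Mor L" "a' \<in> Mor L" "b' \<in> Mor L"
    and "src L a = rng L b" "src L a' = rng L b'"
    and comp_eq: "comp L a b = comp L a' b'" and deg_eq: "deg L a = deg L a'"
  shows "a = a' \<and> b = b'"
proof -
  let ?factors = "\<lambda>p. fst p \<in> Mor L \<and> snd p \<in> Mor L \<and> deg L (fst p) = deg L a \<and>
    deg L (snd p) = deg L b \<and> src L (fst p) = rng L (snd p) \<and> comp L (fst p) (snd p) = comp L a b"
  have "deg_add (deg L a) (deg L b) = deg_add (deg L a') (deg L b')"
    using comp_eq assms(1-6) kgraph_deg_comp by metis
  then have deg_eq': "deg L b = deg L b'"
    using deg_eq by (simp add: deg_add_def fun_eq_iff)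
  have "\<forall>m n. \<forall>l\<in>Mor L. deg L l = deg_add m n \<longrightarrow>
      (\<exists>!p. fst p \<in> Mor L \<and> snd p \<in> Mor L \<and> deg L (fst p) = m \<and> deg L (snd p) = n \<and>
            src L (fst p) = rng L (snd p) \<and> comp L (fst p) (snd p) = l)"
    using kgraph unfolding is_kgraph_def by blast
  then have "\<exists>!p. ?factors p"
    using assms(1,2,5) kgraph_comp_Mor kgraph_deg_comp by simp
  then obtain p where unique: "\<And>q. ?factors q \<Longrightarrow> q = p" by blast
  have "?factors (a, b)" "?factors (a', b')"
    using assms deg_eq' by simp_all
  then show ?thesis
    using unique by (metis prod.inject)
qed

end

context
  fixes G :: "('c, 'k) kgraph" and L :: "('a, 'k) kgraph" and f :: "'c \<Rightarrow> 'a"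
  assumes morphism: "is_kgraph_morphism G L f"
begin

lemma kgraph_morphism_Mor: "\<gamma> \<in> Mor G \<Longrightarrow> f \<gamma> \<in> Mor L"
  and kgraph_morphism_deg: "\<gamma> \<in> Mor G \<Longrightarrow> deg L (f \<gamma>) = deg G \<gamma>"
  and kgraph_morphism_rng: "\<gamma> \<in> Mor G \<Longrightarrow> rng L (f \<gamma>) = f (rng G \<gamma>)"
  and kgraph_morphism_src: "\<gamma> \<in> Mor G \<Longrightarrow> src L (f \<gamma>) = f (src G \<gamma>)"
  and kgraph_morphism_comp:
    "\<mu> \<in> Mor G \<Longrightarrow> \<nu> \<in> Mor G \<Longrightarrow> src G \<mu> = rng G \<nu> \<Longrightarrow> f (comp G \<mu> \<nu>) = comp L (f \<mu>) (f \<nu>)"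
  using morphism unfolding is_kgraph_morphism_def by blast+

end

context
  fixes G :: "('c, 'k::finite) kgraph" and L :: "('a, 'k) kgraph" and f :: "'c \<Rightarrow> 'a"
  assumes kgraph_G: "is_kgraph G"
    and kgraph_L: "is_kgraph L"
    and morphism: "is_kgraph_morphism G L f"
    and inj: "inj_on f (Mor G)"
begin

lemma inj_kgraph_morphism_rng_eq:
  "\<gamma> \<in> Mor G \<Longrightarrow> \<delta> \<in> Mor G \<Longrightarrow> rng L (f \<gamma>) = f \<delta> \<Longrightarrow> rng G \<gamma> = \<delta>"
  and inj_kgraph_morphism_src_eq:
  "\<gamma> \<in> Mor G \<Longrightarrow> \<delta> \<in> Mor G \<Longrightarrow> src L (f \<gamma>) = f \<delta> \<Longrightarrow> src G \<gamma> = \<delta>"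
  using inj kgraph_rng_Mor[OF kgraph_G] kgraph_src_Mor[OF kgraph_G]
    kgraph_morphism_rng[OF morphism] kgraph_morphism_src[OF morphism]
  by (metis inj_onD)+

lemma inj_kgraph_morphism_reflects_composable:
  assumes "\<gamma> \<in> Mor G" "\<delta> \<in> Mor G" "src L (f \<gamma>) = rng L (f \<delta>)"
  shows "src G \<gamma> = rng G \<delta>"
  using assms inj_kgraph_morphism_src_eq kgraph_rng_Mor[OF kgraph_G]
    kgraph_morphism_rng[OF morphism] by metis

lemma hereditary_image_factors:
  assumes "hereditary L (f ` Mor G)"
    and "a \<in> Mor L" "b \<in> Mor L" "src L a = rng L b" "comp L a b \<in> f ` Mor G"
  shows "a \<in> f ` Mor G \<and> b \<in> f ` Mor G"
proof -
  let ?S = "f ` Mor G"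
  have S: "\<And>l. l \<in> Mor L \<Longrightarrow> rng L l \<in> ?S \<Longrightarrow> l \<in> ?S" "\<And>l. l \<in> ?S \<Longrightarrow> rng L l \<in> ?S"
    using assms(1) kgraph_rng_Obj[OF kgraph_L] unfolding hereditary_def by blast+
  have "rng L a \<in> ?S"
    using S(2)[OF assms(5)] kgraph_rng_comp[OF kgraph_L assms(2-4)] by simp
  then have a: "a \<in> ?S" using S(1) assms(2) by blast
  then obtain \<alpha> where "\<alpha> \<in> Mor G" "a = f \<alpha>" by blast
  then have "rng L b = f (src G \<alpha>)"
    using assms(4) kgraph_morphism_src[OF morphism] by simp
  then have "rng L b \<in> ?S"
    using kgraph_src_Mor[OF kgraph_G \<open>\<alpha> \<in> Mor G\<close>] by blast
  then show ?thesis using a S(1) assms(3) by blast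
qed

lemma cohereditary_image_factors:
  assumes "cohereditary L (f ` Mor G)"
    and "a \<in> Mor L" "b \<in> Mor L" "src L a = rng L b" "comp L a b \<in> f ` Mor G"
  shows "a \<in> f ` Mor G \<and> b \<in> f ` Mor G"
proof -
  let ?S = "f ` Mor G"
  have S: "\<And>l. l \<in> Mor L \<Longrightarrow> src L l \<in> ?S \<Longrightarrow> l \<in> ?S" "\<And>l. l \<in> ?S \<Longrightarrow> src L l \<in> ?S"
    using assms(1) kgraph_src_Obj[OF kgraph_L] unfolding cohereditary_def by blast+
  have "src L b \<in> ?S"
    using S(2)[OF assms(5)] kgraph_src_comp[OF kgraph_L assms(2-4)] by simp
  then have b: "b \<in> ?S" using S(1) assms(3) by blast
  then obtain \<beta> where "\<beta> \<in> Mor G" "b = f \<beta>" by blast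
  then have "src L a = f (rng G \<beta>)"
    using assms(4) kgraph_morphism_rng[OF morphism] by simp
  then have "src L a \<in> ?S"
    using kgraph_rng_Mor[OF kgraph_G \<open>\<beta> \<in> Mor G\<close>] by blast
  then show ?thesis using b S(1) assms(2) by blast
qed

lemma inj_kgraph_morphism_factors:
  assumes "hereditary L (f ` Mor G) \<or> cohereditary L (f ` Mor G)"
    and "a \<in> Mor L" "b \<in> Mor L" "src L a = rng L b"
    and "\<gamma> \<in> Mor G" "comp L a b = f \<gamma>"
  obtains \<alpha> \<beta> where "\<alpha> \<in> Mor G" "\<beta> \<in> Mor G" "a = f \<alpha>" "b = f \<beta>"
    "src G \<alpha> = rng G \<beta>" "comp G \<alpha> \<beta> = \<gamma>"
proof -
  have "a \<in> f ` Mor G \<and> b \<in> f ` Mor G"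
    using assms hereditary_image_factors cohereditary_image_factors by blast
  then obtain \<alpha> \<beta> where \<alpha>\<beta>: "\<alpha> \<in> Mor G" "\<beta> \<in> Mor G" "a = f \<alpha>" "b = f \<beta>" by blast
  then have composable: "src G \<alpha> = rng G \<beta>"
    using assms(4) inj_kgraph_morphism_reflects_composable by blast
  then have "f (comp G \<alpha> \<beta>) = f \<gamma>"
    using \<alpha>\<beta> assms(6) kgraph_morphism_comp[OF morphism] by simp
  then have "comp G \<alpha> \<beta> = \<gamma>"
    using inj \<alpha>\<beta> composable assms(5) kgraph_comp_Mor[OF kgraph_G] by (meson inj_onD)
  then show thesis using that \<alpha>\<beta> composable by blast
qed

lemma hereditary_image_lift:
  assumes "hereditary L (f ` Mor G)" "b \<in> Mor L" "\<gamma> \<in> Mor G" "rng L b = f \<gamma>"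
  obtains \<delta> where "\<delta> \<in> Mor G" "b = f \<delta>" "rng G \<delta> = \<gamma>"
proof -
  have "b \<in> f ` Mor G"
    using assms kgraph_rng_Obj[OF kgraph_L] unfolding hereditary_def by blast
  then show thesis
    using that assms(3,4) inj_kgraph_morphism_rng_eq by blast
qed

lemma cohereditary_image_lift:
  assumes "cohereditary L (f ` Mor G)" "a \<in> Mor L" "\<gamma> \<in> Mor G" "src L a = f \<gamma>"
  obtains \<delta> where "\<delta> \<in> Mor G" "a = f \<delta>" "src G \<delta> = \<gamma>"
proof -
  have "a \<in> f ` Mor G"
    using assms kgraph_src_Obj[OF kgraph_L] unfolding cohereditary_def by blast
  then show thesis
    using that assms(3,4) inj_kgraph_morphism_src_eq by blast
qed

end

lemma equiv_closure_on_eq: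
  assumes "R \<subseteq> A \<times> A" and "trans (Id_on A \<union> R \<union> R\<inverse>)"
  shows "equiv_closure_on A R = Id_on A \<union> R \<union> R\<inverse>"
proof
  have "equiv A (Id_on A \<union> R \<union> R\<inverse>)"
    using assms by (intro equivI) (auto simp: refl_on_def sym_def)
  then show "equiv_closure_on A R \<subseteq> Id_on A \<union> R \<union> R\<inverse>"
    unfolding equiv_closure_on_def by blast
  show "Id_on A \<union> R \<union> R\<inverse> \<subseteq> equiv_closure_on A R"
    unfolding equiv_closure_on_def equiv_def refl_on_def sym_def by blast
qed

lemma kg_union_simps [simp]:
  "Mor (kg_union L1 L2) = Inl ` Mor L1 \<union> Inr ` Mor L2"
  "rng (kg_union L1 L2) (Inl x) = Inl (rng L1 x)" "rng (kg_union L1 L2) (Inr y) = Inr (rng L2 y)"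
  "src (kg_union L1 L2) (Inl x) = Inl (src L1 x)" "src (kg_union L1 L2) (Inr y) = Inr (src L2 y)"
  "comp (kg_union L1 L2) (Inl x) (Inl x') = Inl (comp L1 x x')"
  "comp (kg_union L1 L2) (Inr y) (Inr y') = Inr (comp L2 y y')"
  "deg (kg_union L1 L2) (Inl x) = deg L1 x" "deg (kg_union L1 L2) (Inr y) = deg L2 y"
  unfolding kg_union_def by simp_all

lemma kg_union_composable_isl:
  "rng (kg_union L1 L2) \<beta> = src (kg_union L1 L2) \<alpha> \<Longrightarrow> isl \<beta> = isl \<alpha>"
  by (cases \<alpha>; cases \<beta>) simp_all

lemma kg_union_composable_cases:
  assumes "\<alpha> \<in> Mor (kg_union L1 L2)" "\<beta> \<in> Mor (kg_union L1 L2)"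
    and "rng (kg_union L1 L2) \<beta> = src (kg_union L1 L2) \<alpha>"
  obtains (left) a b where "\<alpha> = Inl a" "\<beta> = Inl b" "a \<in> Mor L1" "b \<in> Mor L1" "src L1 a = rng L1 b"
    | (right) a b where "\<alpha> = Inr a" "\<beta> = Inr b" "a \<in> Mor L2" "b \<in> Mor L2" "src L2 a = rng L2 b"
  using assms by auto

lemma kg_union_comp_Mor:
  assumes "is_kgraph L1" "is_kgraph L2"
    and "\<alpha> \<in> Mor (kg_union L1 L2)" "\<beta> \<in> Mor (kg_union L1 L2)"
    and "rng (kg_union L1 L2) \<beta> = src (kg_union L1 L2) \<alpha>"
  shows "comp (kg_union L1 L2) \<alpha> \<beta> \<in> Mor (kg_union L1 L2)"
  using assms(3-5) by (cases rule: kg_union_composable_cases)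
    (simp_all add: kgraph_comp_Mor[OF assms(1)] kgraph_comp_Mor[OF assms(2)])

lemma kg_union_factorisation_unique:
  assumes "is_kgraph L1" "is_kgraph L2"
    and "\<alpha> \<in> Mor (kg_union L1 L2)" "\<beta> \<in> Mor (kg_union L1 L2)"
    and "\<alpha>' \<in> Mor (kg_union L1 L2)" "\<beta>' \<in> Mor (kg_union L1 L2)"
    and "rng (kg_union L1 L2) \<beta> = src (kg_union L1 L2) \<alpha>"
    and "rng (kg_union L1 L2) \<beta>' = src (kg_union L1 L2) \<alpha>'"
    and "comp (kg_union L1 L2) \<alpha> \<beta> = comp (kg_union L1 L2) \<alpha>' \<beta>'"
    and "deg (kg_union L1 L2) \<alpha> = deg (kg_union L1 L2) \<alpha>'"
  shows "\<alpha> = \<alpha>' \<and> \<beta> = \<beta>'"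
  using assms(3,4,7)
proof (cases rule: kg_union_composable_cases)
  case first: (left a b)
  from assms(5,6,8) show ?thesis
  proof (cases rule: kg_union_composable_cases)
    case (left a' b')
    then show ?thesis
      using first left assms(9,10) kgraph_factorisation_unique[OF assms(1), of a b a' b'] by simp
  qed (use first assms(9) in simp)
next
  case first: (right a b)
  from assms(5,6,8) show ?thesis
  proof (cases rule: kg_union_composable_cases)
    case (right a' b')
    then show ?thesis
      using first right assms(9,10) kgraph_factorisation_unique[OF assms(2), of a b a' b'] by simp
  qed (use first assms(9) in simp)
qed

locale kgraph_gluing =
  fixes L1 :: "('a, 'k::finite) kgraph" and L2 :: "('b, 'k) kgraph" and G :: "('c, 'k) kgraph"
    and f1 :: "'c \<Rightarrow> 'a" and f2 :: "'c \<Rightarrow> 'b"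
  assumes kgraph_L1: "is_kgraph L1" and kgraph_L2: "is_kgraph L2" and kgraph_G: "is_kgraph G"
    and morphism_f1: "is_kgraph_morphism G L1 f1" and inj_f1: "inj_on f1 (Mor G)"
    and morphism_f2: "is_kgraph_morphism G L2 f2" and inj_f2: "inj_on f2 (Mor G)"
    and hereditary_or_cohereditary:
      "(hereditary L1 (f1 ` Mor G) \<and> hereditary L2 (f2 ` Mor G)) \<or>
       (cohereditary L1 (f1 ` Mor G) \<and> cohereditary L2 (f2 ` Mor G))"
begin

abbreviation \<Lambda> :: "('a + 'b, 'k) kgraph" where
  "\<Lambda> \<equiv> kg_union L1 L2"

abbreviation sim :: "(('a + 'b) \<times> ('a + 'b)) set" where
  "sim \<equiv> sim_phi L1 L2 G f1 f2"

definition glue :: "(('a + 'b) \<times> ('a + 'b)) set" where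
  "glue = {(Inl (f1 \<gamma>), Inr (f2 \<gamma>)) | \<gamma>. \<gamma> \<in> Mor G}"

lemma glue_subset_Mor: "glue \<subseteq> Mor \<Lambda> \<times> Mor \<Lambda>"
  unfolding glue_def
  using kgraph_morphism_Mor[OF morphism_f1] kgraph_morphism_Mor[OF morphism_f2] by auto

lemma trans_glue: "trans (Id_on (Mor \<Lambda>) \<union> glue \<union> glue\<inverse>)"
  using inj_f1 inj_f2 kgraph_morphism_Mor[OF morphism_f1] kgraph_morphism_Mor[OF morphism_f2]
  unfolding trans_def glue_def by (auto dest: inj_onD)

(* Since f1 and f2 are injective, the generating relation glue is a bijection between two
   disjoint sets, so adding the diagonal and the converse already makes it transitive. *)
lemma sim_phi_iff: "(x, y) \<in> sim \<longleftrightarrow> (x \<in> Mor \<Lambda> \<and> y = x) \<or> (x, y) \<in> glue \<or> (y, x) \<in> glue"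
proof -
  have "sim = Id_on (Mor \<Lambda>) \<union> glue \<union> glue\<inverse>"
    unfolding sim_phi_def glue_def[symmetric]
    using equiv_closure_on_eq[OF glue_subset_Mor trans_glue] .
  then show ?thesis by auto
qed

lemma glue_sides: "(x, y) \<in> glue \<Longrightarrow> isl x \<and> \<not> isl y"
  unfolding glue_def by auto

lemma glue_deg: "(x, y) \<in> glue \<Longrightarrow> deg \<Lambda> x = deg \<Lambda> y"
  unfolding glue_def
  using kgraph_morphism_deg[OF morphism_f1] kgraph_morphism_deg[OF morphism_f2] by auto

lemma glue_comp:
  assumes "(\<alpha>, \<alpha>') \<in> glue" "(\<beta>, \<beta>') \<in> glue"
    and "rng \<Lambda> \<beta> = src \<Lambda> \<alpha> \<or> rng \<Lambda> \<beta>' = src \<Lambda> \<alpha>'"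
  shows "(comp \<Lambda> \<alpha> \<beta>, comp \<Lambda> \<alpha>' \<beta>') \<in> glue"
proof -
  obtain \<gamma> \<delta> where \<gamma>: "\<gamma> \<in> Mor G" "\<alpha> = Inl (f1 \<gamma>)" "\<alpha>' = Inr (f2 \<gamma>)"
    and \<delta>: "\<delta> \<in> Mor G" "\<beta> = Inl (f1 \<delta>)" "\<beta>' = Inr (f2 \<delta>)"
    using assms(1,2) unfolding glue_def by blast
  have composable: "src G \<gamma> = rng G \<delta>"
    using assms(3) \<gamma> \<delta>
      inj_kgraph_morphism_reflects_composable[OF kgraph_G kgraph_L1 morphism_f1 inj_f1]
      inj_kgraph_morphism_reflects_composable[OF kgraph_G kgraph_L2 morphism_f2 inj_f2]
    by auto
  then have "(Inl (f1 (comp G \<gamma> \<delta>)), Inr (f2 (comp G \<gamma> \<delta>))) \<in> glue"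
    using kgraph_comp_Mor[OF kgraph_G \<gamma>(1) \<delta>(1)] unfolding glue_def by blast
  then show ?thesis
    using composable \<gamma> \<delta> kgraph_morphism_comp[OF morphism_f1] kgraph_morphism_comp[OF morphism_f2]
    by simp
qed

lemma image_f1_hereditary_or_cohereditary:
    "hereditary L1 (f1 ` Mor G) \<or> cohereditary L1 (f1 ` Mor G)"
  and image_f2_hereditary_or_cohereditary:
    "hereditary L2 (f2 ` Mor G) \<or> cohereditary L2 (f2 ` Mor G)"
  using hereditary_or_cohereditary by blast+

lemma glue_factors:
  assumes "\<alpha> \<in> Mor \<Lambda>" "\<beta> \<in> Mor \<Lambda>" "\<alpha>' \<in> Mor \<Lambda>" "\<beta>' \<in> Mor \<Lambda>"
    and "rng \<Lambda> \<beta> = src \<Lambda> \<alpha>" "rng \<Lambda> \<beta>' = src \<Lambda> \<alpha>'"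
    and "(comp \<Lambda> \<alpha> \<beta>, comp \<Lambda> \<alpha>' \<beta>') \<in> glue" and "deg \<Lambda> \<alpha> = deg \<Lambda> \<alpha>'"
  shows "(\<alpha>, \<alpha>') \<in> glue \<and> (\<beta>, \<beta>') \<in> glue"
proof -
  obtain \<gamma> where \<gamma>: "\<gamma> \<in> Mor G" "comp \<Lambda> \<alpha> \<beta> = Inl (f1 \<gamma>)" "comp \<Lambda> \<alpha>' \<beta>' = Inr (f2 \<gamma>)"
    using assms(7) unfolding glue_def by blast
  obtain a b where ab: "\<alpha> = Inl a" "\<beta> = Inl b" "a \<in> Mor L1" "b \<in> Mor L1" "src L1 a = rng L1 b"
    using assms(1,2,5) \<gamma>(2) by (cases rule: kg_union_composable_cases) auto
  obtain a' b' where ab': "\<alpha>' = Inr a'" "\<beta>' = Inr b'" "a' \<in> Mor L2" "b' \<in> Mor L2" "src L2 a' = rng L2 b'"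
    using assms(3,4,6) \<gamma>(3) by (cases rule: kg_union_composable_cases) auto
  obtain \<alpha>\<^sub>1 \<beta>\<^sub>1 where g1: "\<alpha>\<^sub>1 \<in> Mor G" "\<beta>\<^sub>1 \<in> Mor G" "a = f1 \<alpha>\<^sub>1" "b = f1 \<beta>\<^sub>1"
      "src G \<alpha>\<^sub>1 = rng G \<beta>\<^sub>1" "comp G \<alpha>\<^sub>1 \<beta>\<^sub>1 = \<gamma>"
    using inj_kgraph_morphism_factors[OF kgraph_G kgraph_L1 morphism_f1 inj_f1
        image_f1_hereditary_or_cohereditary ab(3-5) \<gamma>(1)] \<gamma>(2) ab by auto
  obtain \<alpha>\<^sub>2 \<beta>\<^sub>2 where g2: "\<alpha>\<^sub>2 \<in> Mor G" "\<beta>\<^sub>2 \<in> Mor G" "a' = f2 \<alpha>\<^sub>2" "b' = f2 \<beta>\<^sub>2"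
      "src G \<alpha>\<^sub>2 = rng G \<beta>\<^sub>2" "comp G \<alpha>\<^sub>2 \<beta>\<^sub>2 = \<gamma>"
    using inj_kgraph_morphism_factors[OF kgraph_G kgraph_L2 morphism_f2 inj_f2
        image_f2_hereditary_or_cohereditary ab'(3-5) \<gamma>(1)] \<gamma>(3) ab' by auto
  have "deg G \<alpha>\<^sub>1 = deg G \<alpha>\<^sub>2"
    using assms(8) ab ab' g1 g2
      kgraph_morphism_deg[OF morphism_f1] kgraph_morphism_deg[OF morphism_f2] by simp
  then have "\<alpha>\<^sub>1 = \<alpha>\<^sub>2 \<and> \<beta>\<^sub>1 = \<beta>\<^sub>2"
    using kgraph_factorisation_unique[OF kgraph_G, of \<alpha>\<^sub>1 \<beta>\<^sub>1 \<alpha>\<^sub>2 \<beta>\<^sub>2] g1 g2 by simp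
  then show ?thesis
    using ab ab' g1 g2 unfolding glue_def by auto
qed

lemma sim_phi_deg: "(\<mu>, \<nu>) \<in> sim \<Longrightarrow> deg \<Lambda> \<mu> = deg \<Lambda> \<nu>"
  unfolding sim_phi_iff using glue_deg by metis

lemma sim_phi_comp:
  assumes "(\<alpha>, \<alpha>') \<in> sim" "(\<beta>, \<beta>') \<in> sim"
    and "rng \<Lambda> \<beta> = src \<Lambda> \<alpha>" "rng \<Lambda> \<beta>' = src \<Lambda> \<alpha>'"
  shows "(comp \<Lambda> \<alpha> \<beta>, comp \<Lambda> \<alpha>' \<beta>') \<in> sim"
proof -
  have "isl \<beta> = isl \<alpha>" "isl \<beta>' = isl \<alpha>'"
    using assms(3,4) kg_union_composable_isl by blast+
  then consider "\<alpha> \<in> Mor \<Lambda>" "\<beta> \<in> Mor \<Lambda>" "\<alpha>' = \<alpha>" "\<beta>' = \<beta>"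
    | "(\<alpha>, \<alpha>') \<in> glue" "(\<beta>, \<beta>') \<in> glue"
    | "(\<alpha>', \<alpha>) \<in> glue" "(\<beta>', \<beta>) \<in> glue"
    using assms(1,2) glue_sides unfolding sim_phi_iff by metis
  then show ?thesis
  proof cases
    case 1
    then show ?thesis
      using assms(3) kg_union_comp_Mor[OF kgraph_L1 kgraph_L2] unfolding sim_phi_iff by simp
  next
    case 2
    then show ?thesis using assms(3) glue_comp unfolding sim_phi_iff by blast
  next
    case 3
    then show ?thesis using assms(4) glue_comp unfolding sim_phi_iff by blast
  qed
qed

lemma sim_phi_factors:
  assumes "\<alpha> \<in> Mor \<Lambda>" "\<beta> \<in> Mor \<Lambda>" "\<alpha>' \<in> Mor \<Lambda>" "\<beta>' \<in> Mor \<Lambda>"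
    and "rng \<Lambda> \<beta> = src \<Lambda> \<alpha>" "rng \<Lambda> \<beta>' = src \<Lambda> \<alpha>'"
    and "(comp \<Lambda> \<alpha> \<beta>, comp \<Lambda> \<alpha>' \<beta>') \<in> sim" and "deg \<Lambda> \<alpha> = deg \<Lambda> \<alpha>'"
  shows "(\<alpha>, \<alpha>') \<in> sim \<and> (\<beta>, \<beta>') \<in> sim"
  using assms(7)[unfolded sim_phi_iff]
proof (elim disjE conjE)
  assume "comp \<Lambda> \<alpha>' \<beta>' = comp \<Lambda> \<alpha> \<beta>"
  then have "\<alpha> = \<alpha>' \<and> \<beta> = \<beta>'"
    using kg_union_factorisation_unique[OF kgraph_L1 kgraph_L2 assms(1-6)] assms(8) by simp
  then show ?thesis using assms(1,2) unfolding sim_phi_iff by simp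
next
  assume "(comp \<Lambda> \<alpha> \<beta>, comp \<Lambda> \<alpha>' \<beta>') \<in> glue"
  then show ?thesis using glue_factors[OF assms(1-6)] assms(8) unfolding sim_phi_iff by blast
next
  assume "(comp \<Lambda> \<alpha>' \<beta>', comp \<Lambda> \<alpha> \<beta>) \<in> glue"
  then show ?thesis using glue_factors[OF assms(3,4,1,2,6,5)] assms(8) unfolding sim_phi_iff by simp
qed

lemma glue_composable_representatives:
  assumes "\<alpha> \<in> Mor \<Lambda>" "\<beta> \<in> Mor \<Lambda>" "(src \<Lambda> \<alpha>, rng \<Lambda> \<beta>) \<in> glue"
  obtains \<alpha>' \<beta>' where "(\<alpha>', \<alpha>) \<in> sim" "(\<beta>', \<beta>) \<in> sim" "src \<Lambda> \<alpha>' = rng \<Lambda> \<beta>'"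
proof -
  obtain \<gamma> a b where \<gamma>: "\<gamma> \<in> Mor G"
    and ab: "\<alpha> = Inl a" "\<beta> = Inr b" "a \<in> Mor L1" "b \<in> Mor L2" "src L1 a = f1 \<gamma>" "rng L2 b = f2 \<gamma>"
    using assms unfolding glue_def by auto
  from hereditary_or_cohereditary
  consider "hereditary L2 (f2 ` Mor G)" | "cohereditary L1 (f1 ` Mor G)" by blast
  then show thesis
  proof cases
    case 1
    then obtain \<delta> where \<delta>: "\<delta> \<in> Mor G" "b = f2 \<delta>" "rng G \<delta> = \<gamma>"
      using hereditary_image_lift[OF kgraph_G kgraph_L2 morphism_f2 inj_f2 _ ab(4) \<gamma> ab(6)] by blast
    have "(Inl (f1 \<delta>), \<beta>) \<in> glue"
      using \<delta> ab unfolding glue_def by blast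
    moreover have "src \<Lambda> \<alpha> = rng \<Lambda> (Inl (f1 \<delta>))"
      using \<delta> ab kgraph_morphism_rng[OF morphism_f1] by simp
    ultimately show thesis
      using that[of \<alpha> "Inl (f1 \<delta>)"] assms(1) unfolding sim_phi_iff by blast
  next
    case 2
    then obtain \<delta> where \<delta>: "\<delta> \<in> Mor G" "a = f1 \<delta>" "src G \<delta> = \<gamma>"
      using cohereditary_image_lift[OF kgraph_G kgraph_L1 morphism_f1 inj_f1 _ ab(3) \<gamma> ab(5)] by blast
    have "(\<alpha>, Inr (f2 \<delta>)) \<in> glue"
      using \<delta> ab unfolding glue_def by blast
    moreover have "src \<Lambda> (Inr (f2 \<delta>)) = rng \<Lambda> \<beta>"
      using \<delta> ab kgraph_morphism_src[OF morphism_f2] by simp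
    ultimately show thesis
      using that[of "Inr (f2 \<delta>)" \<beta>] assms(2) unfolding sim_phi_iff by blast
  qed
qed

lemma glue_converse_composable_representatives:
  assumes "\<alpha> \<in> Mor \<Lambda>" "\<beta> \<in> Mor \<Lambda>" "(rng \<Lambda> \<beta>, src \<Lambda> \<alpha>) \<in> glue"
  obtains \<alpha>' \<beta>' where "(\<alpha>', \<alpha>) \<in> sim" "(\<beta>', \<beta>) \<in> sim" "src \<Lambda> \<alpha>' = rng \<Lambda> \<beta>'"
proof -
  obtain \<gamma> a b where \<gamma>: "\<gamma> \<in> Mor G"
    and ab: "\<alpha> = Inr a" "\<beta> = Inl b" "a \<in> Mor L2" "b \<in> Mor L1" "src L2 a = f2 \<gamma>" "rng L1 b = f1 \<gamma>"
    using assms unfolding glue_def by auto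
  from hereditary_or_cohereditary
  consider "hereditary L1 (f1 ` Mor G)" | "cohereditary L2 (f2 ` Mor G)" by blast
  then show thesis
  proof cases
    case 1
    then obtain \<delta> where \<delta>: "\<delta> \<in> Mor G" "b = f1 \<delta>" "rng G \<delta> = \<gamma>"
      using hereditary_image_lift[OF kgraph_G kgraph_L1 morphism_f1 inj_f1 _ ab(4) \<gamma> ab(6)] by blast
    have "(\<beta>, Inr (f2 \<delta>)) \<in> glue"
      using \<delta> ab unfolding glue_def by blast
    moreover have "src \<Lambda> \<alpha> = rng \<Lambda> (Inr (f2 \<delta>))"
      using \<delta> ab kgraph_morphism_rng[OF morphism_f2] by simp
    ultimately show thesis
      using that[of \<alpha> "Inr (f2 \<delta>)"] assms(1) unfolding sim_phi_iff by blast
  next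
    case 2
    then obtain \<delta> where \<delta>: "\<delta> \<in> Mor G" "a = f2 \<delta>" "src G \<delta> = \<gamma>"
      using cohereditary_image_lift[OF kgraph_G kgraph_L2 morphism_f2 inj_f2 _ ab(3) \<gamma> ab(5)] by blast
    have "(Inl (f1 \<delta>), \<alpha>) \<in> glue"
      using \<delta> ab unfolding glue_def by blast
    moreover have "src \<Lambda> (Inl (f1 \<delta>)) = rng \<Lambda> \<beta>"
      using \<delta> ab kgraph_morphism_src[OF morphism_f1] by simp
    ultimately show thesis
      using that[of "Inl (f1 \<delta>)" \<beta>] assms(2) unfolding sim_phi_iff by blast
  qed
qed

lemma sim_phi_composable_representatives:
  assumes "\<alpha> \<in> Mor \<Lambda>" "\<beta> \<in> Mor \<Lambda>" "(src \<Lambda> \<alpha>, rng \<Lambda> \<beta>) \<in> sim"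
  shows "\<exists>\<alpha>' \<beta>'. (\<alpha>', \<alpha>) \<in> sim \<and> (\<beta>', \<beta>) \<in> sim \<and> src \<Lambda> \<alpha>' = rng \<Lambda> \<beta>'"
proof -
  consider "rng \<Lambda> \<beta> = src \<Lambda> \<alpha>" | "(src \<Lambda> \<alpha>, rng \<Lambda> \<beta>) \<in> glue" | "(rng \<Lambda> \<beta>, src \<Lambda> \<alpha>) \<in> glue"
    using assms(3) unfolding sim_phi_iff by blast
  then show ?thesis
  proof cases
    case 1
    then show ?thesis using assms(1,2) unfolding sim_phi_iff by metis
  next
    case 2
    then show ?thesis using glue_composable_representatives[OF assms(1,2)] by metis
  next
    case 3
    then show ?thesis using glue_converse_composable_representatives[OF assms(1,2)] by metis
  qed
qed

end

theorem mainTheorem2: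
  fixes L1 :: "('a, 'k::finite) kgraph" and L2 :: "('b, 'k) kgraph" and G :: "('c, 'k) kgraph"
    and f1 :: "'c \<Rightarrow> 'a" and f2 :: "'c \<Rightarrow> 'b"
  assumes "is_kgraph L1" and "is_kgraph L2" and "is_kgraph G"
    and "is_kgraph_morphism G L1 f1" and "inj_on f1 (Mor G)"
    and "is_kgraph_morphism G L2 f2" and "inj_on f2 (Mor G)"
    and "(hereditary L1 (f1 ` Mor G) \<and> hereditary L2 (f2 ` Mor G)) \<or>
         (cohereditary L1 (f1 ` Mor G) \<and> cohereditary L2 (f2 ` Mor G))"
  defines "U \<equiv> kg_union L1 L2" and "E \<equiv> sim_phi L1 L2 G f1 f2"
  shows
    "(\<forall>\<mu> \<nu>. (\<mu>, \<nu>) \<in> E \<longrightarrow> deg U \<mu> = deg U \<nu>) \<and>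
     (\<forall>\<alpha> \<alpha>' \<beta> \<beta>'. (\<alpha>, \<alpha>') \<in> E \<longrightarrow> (\<beta>, \<beta>') \<in> E \<longrightarrow>
        rng U \<beta> = src U \<alpha> \<longrightarrow> rng U \<beta>' = src U \<alpha>' \<longrightarrow>
        (comp U \<alpha> \<beta>, comp U \<alpha>' \<beta>') \<in> E) \<and>
     (\<forall>\<alpha> \<alpha>' \<beta> \<beta>'. \<alpha> \<in> Mor U \<longrightarrow> \<alpha>' \<in> Mor U \<longrightarrow> \<beta> \<in> Mor U \<longrightarrow> \<beta>' \<in> Mor U \<longrightarrow>
        rng U \<beta> = src U \<alpha> \<longrightarrow> rng U \<beta>' = src U \<alpha>' \<longrightarrow>
        (comp U \<alpha> \<beta>, comp U \<alpha>' \<beta>') \<in> E \<longrightarrow> deg U \<alpha> = deg U \<alpha>' \<longrightarrow>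
        (\<alpha>, \<alpha>') \<in> E \<and> (\<beta>, \<beta>') \<in> E) \<and>
     (\<forall>\<alpha> \<beta>. \<alpha> \<in> Mor U \<longrightarrow> \<beta> \<in> Mor U \<longrightarrow> (src U \<alpha>, rng U \<beta>) \<in> E \<longrightarrow>
        (\<exists>\<alpha>' \<beta>'. (\<alpha>', \<alpha>) \<in> E \<and> (\<beta>', \<beta>) \<in> E \<and> src U \<alpha>' = rng U \<beta>'))"
proof -
  interpret kgraph_gluing L1 L2 G f1 f2
    using assms(1-8) by unfold_locales
  show ?thesis
    unfolding U_def E_def
    using sim_phi_deg sim_phi_comp sim_phi_factors sim_phi_composable_representatives
    by blast
qed

end
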